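(* Let $\{\alpha_k^{c}\}$ and $\{\tilde\alpha_k^{c}\}$ be the sequences of actual and tentative continuous stepsizes yielded by Algorithm DFNDFL (described in the context) along the directions $s_k\in D^c(x_k)$. Then \[ \lim_{k\to\infty}\max \{\alpha_k^{c}, \tilde \alpha_k^{c}\} = 0. \]
   Context: Consider the problem $\min f(x)$ s.t. $x\in X\cap\mathcal{Z}$, where $X=\{x\in\mathbb{R}^n: l\le x\le u\}$ is compact (with $l_i<u_i$, and $l_i,u_i\in\mathbb{Z}$ for $i\in I^z$), $\mathcal{Z}=\{x\in\mathbb{R}^n: x_i\in\mathbb{Z},\ i\in I^z\}$, $I^c\cup I^z=\{1,\dots,n\}$, $I^c\cap I^z=\emptyset$, and $f$ is continuous and Lipschitz continuous with respect to the continuous variables $x_i$, $i\in I^c$. $[x]_{[l,u]}=\max\{l,\min\{u,x\}\}$ denotes projection onto $X$. $D^c(x)$ is the cone of vectors $s$ with $s_i=0$ for $i\in I^z$, $s_i\ge0$ if $i\in I^c$ and $x_i=l_i$, $s_i\le 0$ if $i\in I^c$ and $x_i=u_i$. Projected Continuous Search$(\tilde\alpha,w,p;\alpha,\tilde p)$ with data $\gamma>0$, $\delta\in(0,1)$: set $\alpha=\tilde\alpha$; if $f([w+\alpha p]_{[l,u]})\le f(w)-\gamma\alpha^2$ set $\tilde p=p$, else if $f([w-\alpha p]_{[l,u]})\le f(w)-\gamma\alpha^2$ set $\tilde p=-p$, else return $\alpha=0$, $\tilde p=p$; in the successful case repeatedly set $\beta=\alpha/\delta$ and, while $f([w+\beta\tilde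 p]_{[l,u]})\le f(w)-\gamma\beta^2$, set $\alpha=\beta$; return $\alpha,\tilde p$. Algorithm DFNDFL: start from $x_0\in X\cap\mathcal{Z}$, $\xi_0>0$, $\theta\in(0,1)$, a sequence $\{s_k\}$ with $s_k\in D^c(x_0)$, $\|s_k\|=1$, and $\tilde\alpha_0^c=1$. At iteration $k$, Phase 1 computes $\alpha_k^c,\tilde s_k$ by the Projected Continuous Search$(\tilde\alpha_k^c,x_k,s_k)$; if $\alpha_k^c=0$ then $\tilde\alpha_{k+1}^c=\theta\tilde\alpha_k^c$ and $\tilde x_k=x_k$, otherwise $\tilde\alpha_{k+1}^c=\alpha_k^c$ and $\tilde x_k=[x_k+\alpha_k^c\tilde s_k]_{[l,u]}$. Phase 2 then explores feasible primitive integer directions (directions with zero continuous part and integer part having greatest common divisor 1) by a Discrete Search requiring sufficient decrease $f(w+\alpha p)\le f(w)-\xi_k$, producing a point $y^+\in X\cap\mathcal{Z}$ with $f(y^+)\le f(\tilde x_k)$, and updates $\xi_k$ (nonincreasingly). Phase 3 chooses any $x_{k+1}\in X\cap\mathcal{Z}$ with $f(x_{k+1})\le f(y^+)$. Hence $f(x_{k+1})\le f(\tilde x_k)\le f(x_k)$ for all $k$. *)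

theory Defs
  imports "HOL-Analysis.Analysis"
begin

text \<open>Vectors live in real^'n for an arbitrary finite index type 'n; Iz is the set of
 integer indices, its complement the continuous indices.\<close>

definition boxX :: "real^'n \<Rightarrow> real^'n \<Rightarrow> (real^'n) set" where
  "boxX l u = {x. \<forall>i. l$i \<le> x$i \<and> x$i \<le> u$i}"

definition intZ :: "'n set \<Rightarrow> (real^'n) set" where
  "intZ Iz = {x. \<forall>i\<in>Iz. x$i \<in> \<int>}"

definition proj :: "real^'n \<Rightarrow> real^'n \<Rightarrow> real^'n \<Rightarrow> real^'n" where
  "proj l u x = (\<chi> i. max (l$i) (min (u$i) (x$i)))"

definition Dc :: "'n set \<Rightarrow> real^'n \<Rightarrow> real^'n \<Rightarrow> real^'n \<Rightarrow> (real^'n) set" where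
  "Dc Iz l u x = {s. (\<forall>i\<in>Iz. s$i = 0) \<and>
      (\<forall>i. i \<notin> Iz \<and> x$i = l$i \<longrightarrow> s$i \<ge> 0) \<and>
      (\<forall>i. i \<notin> Iz \<and> x$i = u$i \<longrightarrow> s$i \<le> 0)}"

text \<open>Expansion loop of the Projected Continuous Search, started with accepted step a0
 along direction p: the returned step is a0/delta^j where the steps a0/delta^i, i \<le> j,
 all pass the sufficient-decrease test and a0/delta^(j+1) fails it.\<close>
definition pcs_expand ::
  "(real^'n \<Rightarrow> real) \<Rightarrow> real^'n \<Rightarrow> real^'n \<Rightarrow> real \<Rightarrow> real \<Rightarrow>
   real \<Rightarrow> real^'n \<Rightarrow> real^'n \<Rightarrow> real \<Rightarrow> bool" where
  "pcs_expand f l u \<gamma> \<delta> a0 w p a \<longleftrightarrow>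
     (\<exists>j::nat. a = a0 / \<delta>^j \<and>
        (\<forall>i\<le>j. f (proj l u (w + (a0 / \<delta>^i) *\<^sub>R p)) \<le> f w - \<gamma> * (a0 / \<delta>^i)^2) \<and>
        \<not> (f (proj l u (w + (a0 / \<delta>^(Suc j)) *\<^sub>R p)) \<le> f w - \<gamma> * (a0 / \<delta>^(Suc j))^2))"

definition pcs ::
  "(real^'n \<Rightarrow> real) \<Rightarrow> real^'n \<Rightarrow> real^'n \<Rightarrow> real \<Rightarrow> real \<Rightarrow>
   real \<Rightarrow> real^'n \<Rightarrow> real^'n \<Rightarrow> real \<Rightarrow> real^'n \<Rightarrow> bool" where
  "pcs f l u \<gamma> \<delta> ta w p a pt \<longleftrightarrow>
     (if f (proj l u (w + ta *\<^sub>R p)) \<le> f w - \<gamma> * ta^2 then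
        pt = p \<and> pcs_expand f l u \<gamma> \<delta> ta w pt a
      else if f (proj l u (w - ta *\<^sub>R p)) \<le> f w - \<gamma> * ta^2 then
        pt = - p \<and> pcs_expand f l u \<gamma> \<delta> ta w pt a
      else a = 0 \<and> pt = p)"

end

theory Submission
  imports Defs
begin

text \<open>Every nonzero continuous step of the search decreases f by at least \<gamma> times its square,
  and the later phases never increase f. Since f is bounded below on the compact box, the
  squares of the accepted steps are summable, so the accepted steps tend to 0. The tentative
  step is either the last accepted step or \<theta> times its predecessor, so it tends to 0 as well.\<close>

lemma summable_descent_bounded_below:
  fixes \<phi> c :: "nat \<Rightarrow> real"
  assumes c_nonneg: "\<And>k. 0 \<le> c k"
    and descent: "\<And>k. \<phi> (Suc k) \<le> \<phi> k - c k"
    and bounded: "\<And>k. B \<le> \<phi> k"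
  shows "summable c"
proof (rule summableI_nonneg_bounded)
  have partial_sum: "\<phi> n \<le> \<phi> 0 - (\<Sum>k<n. c k)" for n
  proof (induction n)
    case (Suc n)
    then show ?case
      using descent[of n] by simp
  qed simp
  show "(\<Sum>k<n. c k) \<le> \<phi> 0 - B" for n
    using partial_sum[of n] bounded[of n] by linarith
qed (rule c_nonneg)

lemma LIMSEQ_zero_if_le_max_contraction:
  fixes t a :: "nat \<Rightarrow> real"
  assumes \<theta>: "0 \<le> \<theta>" "\<theta> < 1"
    and t_nonneg: "\<And>k. 0 \<le> t k"
    and t_Suc: "\<And>k. t (Suc k) \<le> max (\<theta> * t k) (a k)"
    and a: "a \<longlonglongrightarrow> 0"
  shows "t \<longlonglongrightarrow> 0"
proof (rule order_tendstoI)
  fix r :: real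
  assume "r < 0"
  then show "\<forall>\<^sub>F k in sequentially. r < t k"
    using t_nonneg by (simp add: less_le_trans)
next
  fix r :: real
  assume r: "0 < r"
  then obtain K where K: "\<And>k. K \<le> k \<Longrightarrow> a k < r / 2"
    using order_tendstoD(2)[OF a, of "r / 2"] by (auto simp: eventually_sequentially)
  have bound: "t (K + m) \<le> max (r / 2) (\<theta> ^ m * t K)" for m
  proof (induction m)
    case (Suc m)
    have "\<theta> * t (K + m) \<le> \<theta> * max (r / 2) (\<theta> ^ m * t K)"
      using Suc.IH \<theta>(1) by (rule mult_left_mono)
    also have "\<dots> \<le> max (r / 2) (\<theta> ^ Suc m * t K)"
    proof (cases "r / 2 \<le> \<theta> ^ m * t K")
      case False
      then have "\<theta> * max (r / 2) (\<theta> ^ m * t K) = \<theta> * (r / 2)"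
        by simp
      also have "\<dots> \<le> r / 2"
        by (rule mult_left_le_one_le) (use \<theta> r in auto)
      finally show ?thesis
        by (rule order_trans) simp
    qed (simp add: mult.assoc)
    finally show ?case
      using t_Suc[of "K + m"] K[of "K + m"] by simp
  qed simp
  have "(\<lambda>m. \<theta> ^ m * t K) \<longlonglongrightarrow> 0"
    using \<theta> by (intro tendsto_mult_left_zero LIMSEQ_power_zero) simp
  then obtain M where M: "\<And>m. M \<le> m \<Longrightarrow> \<theta> ^ m * t K < r / 2"
    using order_tendstoD(2)[of _ 0 sequentially "r / 2"] r by (auto simp: eventually_sequentially)
  have "t k < r" if "K + M \<le> k" for k
    using bound[of "k - K"] M[of "k - K"] that r by simp
  then show "\<forall>\<^sub>F k in sequentially. t k < r"
    by (auto simp: eventually_sequentially)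
qed

lemma boxX_eq_cbox: "boxX l u = cbox l u"
  unfolding boxX_def by (auto simp: mem_box_cart)

lemma pcs_nonzero_step:
  assumes "pcs f l u \<gamma> \<delta> ta w p a pt" "a \<noteq> 0"
  shows "\<exists>j. a = ta / \<delta> ^ j"
    and "f (proj l u (w + a *\<^sub>R pt)) \<le> f w - \<gamma> * a\<^sup>2"
  using assms unfolding pcs_def pcs_expand_def by (auto split: if_splits)

text \<open>Neither integrality, nor Lipschitz continuity, nor the discrete search enters the
  argument beyond the fact that Phases 2 and 3 do not increase f.\<close>

locale continuous_stepsizes =
  fixes f :: "real^'n \<Rightarrow> real" and l u :: "real^'n" and \<gamma> \<delta> \<theta> :: real
    and x s xt st :: "nat \<Rightarrow> real^'n" and ac ta :: "nat \<Rightarrow> real"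
  assumes f_cont: "continuous_on (boxX l u) f"
    and \<gamma>: "0 < \<gamma>" and \<delta>: "0 < \<delta>" and \<theta>: "0 \<le> \<theta>" "\<theta> < 1"
    and ta0: "0 \<le> ta 0"
    and x_box: "\<And>k. x k \<in> boxX l u"
    and phase1: "\<And>k. pcs f l u \<gamma> \<delta> (ta k) (x k) (s k) (ac k) (st k)"
    and upd0: "\<And>k. ac k = 0 \<Longrightarrow> ta (Suc k) = \<theta> * ta k \<and> xt k = x k"
    and upd1: "\<And>k. ac k \<noteq> 0 \<Longrightarrow> ta (Suc k) = ac k \<and> xt k = proj l u (x k + ac k *\<^sub>R st k)"
    and f_xt: "\<And>k. f (x (Suc k)) \<le> f (xt k)"
begin

lemma ac_nonneg_if_ta_nonneg:
  assumes "0 \<le> ta k"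
  shows "0 \<le> ac k"
proof (cases "ac k = 0")
  case False
  then obtain j where "ac k = ta k / \<delta> ^ j"
    using pcs_nonzero_step(1)[OF phase1] by blast
  then show ?thesis
    using assms \<delta> by simp
qed simp

lemma ta_nonneg: "0 \<le> ta k"
proof (induction k)
  case (Suc k)
  then show ?case
    using upd0[of k] upd1[of k] ac_nonneg_if_ta_nonneg[of k] \<theta> by (cases "ac k = 0") auto
qed (rule ta0)

lemma ac_nonneg: "0 \<le> ac k"
  by (rule ac_nonneg_if_ta_nonneg[OF ta_nonneg])

lemma ta_Suc_le: "ta (Suc k) \<le> max (\<theta> * ta k) (ac k)"
  using upd0[of k] upd1[of k] by (cases "ac k = 0") auto

lemma f_sufficient_decrease: "f (x (Suc k)) \<le> f (x k) - \<gamma> * (ac k)\<^sup>2"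
  using upd0[of k] upd1[of k] pcs_nonzero_step(2)[OF phase1[of k]] f_xt[of k]
  by (cases "ac k = 0") auto

lemma f_bounded_below: "\<exists>B. \<forall>k. B \<le> f (x k)"
proof -
  have "compact (boxX l u)" "boxX l u \<noteq> {}"
    using x_box by (auto simp: boxX_eq_cbox)
  then obtain z where "\<forall>y\<in>boxX l u. f z \<le> f y"
    using continuous_attains_inf f_cont by blast
  then show ?thesis
    using x_box by blast
qed

lemma ac_tendsto_zero: "ac \<longlonglongrightarrow> 0"
proof -
  obtain B where B: "\<And>k. B \<le> f (x k)"
    using f_bounded_below by blast
  have "summable (\<lambda>k. \<gamma> * (ac k)\<^sup>2)"
  proof (rule summable_descent_bounded_below)
    show "0 \<le> \<gamma> * (ac k)\<^sup>2" for k
      using \<gamma> by simp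
    show "f (x (Suc k)) \<le> f (x k) - \<gamma> * (ac k)\<^sup>2" for k
      by (rule f_sufficient_decrease)
    show "B \<le> f (x k)" for k
      by (rule B)
  qed
  then have "summable (\<lambda>k. (ac k)\<^sup>2)"
    using \<gamma> by simp
  then have "(\<lambda>k. (ac k)\<^sup>2) \<longlonglongrightarrow> 0"
    by (rule summable_LIMSEQ_zero)
  then show ?thesis
    by (simp add: power_tendsto_0_iff)
qed

lemma ta_tendsto_zero: "ta \<longlonglongrightarrow> 0"
  using \<theta> ta_nonneg ta_Suc_le ac_tendsto_zero by (rule LIMSEQ_zero_if_le_max_contraction)

end

theorem mainTheorem7:
  fixes f :: "real^'n \<Rightarrow> real" and l u :: "real^'n" and Iz :: "'n set"
    and \<gamma> \<delta> \<theta> :: real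
    and x s xt st y :: "nat \<Rightarrow> real^'n" and ac ta \<xi> :: "nat \<Rightarrow> real"
  assumes lu: "\<And>i. l$i < u$i"
    and lu_int: "\<And>i. i \<in> Iz \<Longrightarrow> l$i \<in> \<int> \<and> u$i \<in> \<int>"
    and f_cont: "continuous_on UNIV f"
    and f_lip: "\<exists>L. \<forall>v w. (\<forall>i\<in>Iz. v$i = w$i) \<longrightarrow> \<bar>f v - f w\<bar> \<le> L * norm (v - w)"
    and \<gamma>: "\<gamma> > 0" and \<delta>: "0 < \<delta>" "\<delta> < 1" and \<theta>: "0 < \<theta>" "\<theta> < 1"
    and x0: "x 0 \<in> boxX l u \<inter> intZ Iz"
    and \<xi>0: "\<xi> 0 > 0"
    and ta0: "ta 0 = 1"
    and s_dir: "\<And>k. s k \<in> Dc Iz l u (x k) \<and> norm (s k) = 1"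
    and phase1: "\<And>k. pcs f l u \<gamma> \<delta> (ta k) (x k) (s k) (ac k) (st k)"
    and upd0: "\<And>k. ac k = 0 \<Longrightarrow> ta (Suc k) = \<theta> * ta k \<and> xt k = x k"
    and upd1: "\<And>k. ac k \<noteq> 0 \<Longrightarrow> ta (Suc k) = ac k \<and> xt k = proj l u (x k + ac k *\<^sub>R st k)"
    and phase2: "\<And>k. y k \<in> boxX l u \<inter> intZ Iz \<and> f (y k) \<le> f (xt k)
                       \<and> 0 < \<xi> (Suc k) \<and> \<xi> (Suc k) \<le> \<xi> k"
    and phase3: "\<And>k. x (Suc k) \<in> boxX l u \<inter> intZ Iz \<and> f (x (Suc k)) \<le> f (y k)"
  shows "(\<lambda>k. max (ac k) (ta k)) \<longlonglongrightarrow> 0"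
proof -
  interpret continuous_stepsizes f l u \<gamma> \<delta> \<theta> x s xt st ac ta
  proof
    show "continuous_on (boxX l u) f"
      using f_cont by (rule continuous_on_subset) simp
    show "x k \<in> boxX l u" for k
      using x0 phase3 by (cases k) auto
    show "f (x (Suc k)) \<le> f (xt k)" for k
      using phase2[of k] phase3[of k] by linarith
  qed (use \<gamma> \<delta> \<theta> ta0 phase1 upd0 upd1 in auto)
  have "(\<lambda>k. max (ac k) (ta k)) \<longlonglongrightarrow> max 0 0"
    by (intro tendsto_max ac_tendsto_zero ta_tendsto_zero)
  then show ?thesis
    by simp
qed

end
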